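(* Let $F$ be an imaginary quadratic field other than $\mathbb{Q}(\sqrt{-1})$ and $\mathbb{Q}(\sqrt{-3})$, $\Gamma\subset\mathrm{SL}_2(F)$ an arithmetic subgroup, $P$ a parabolic subgroup of $\mathrm{Res}_{F/\mathbb{Q}}(\mathrm{SL}_{2/F})$ with unipotent radical $U_P$, and $R$ a ring in which $2$ is invertible. Put $\Gamma_P=\Gamma\cap P(\mathbb{Q})$ and $\Gamma_{U_P}=\Gamma\cap U_P(\mathbb{Q})$. Then $H^1(\Gamma_P,R)\cong H^1(\Gamma_{U_P},R)$.
   Context: Group cohomology with trivial coefficients $R$, so $H^1(\cdot,R)=\mathrm{Hom}(\cdot,R)$. *)

theory Defs
  imports "HOL-Analysis.Analysis" "HOL-Computational_Algebra.Polynomial"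
    "HOL-Computational_Algebra.Squarefree"
begin

definition imag_quad_field :: "nat \<Rightarrow> complex set" where
  "imag_quad_field d = {of_rat a + of_rat b * (\<i> * of_real (sqrt (real d))) | a b. True}"

definition alg_int :: "complex \<Rightarrow> bool" where
  "alg_int x \<longleftrightarrow> (\<exists>p :: int poly. lead_coeff p = 1 \<and> poly (map_poly of_int p) x = 0)"

definition ring_of_integers :: "complex set \<Rightarrow> complex set" where
  "ring_of_integers F = {x \<in> F. alg_int x}"

definition SL2 :: "complex set \<Rightarrow> (complex^2^2) set" where
  "SL2 S = {A. (\<forall>i j. A $ i $ j \<in> S) \<and> det A = 1}"

definition is_subgroup :: "(complex^2^2) set \<Rightarrow> (complex^2^2) set \<Rightarrow> bool" where
  "is_subgroup H G \<longleftrightarrow> H \<subseteq> G \<and> mat 1 \<in> H \<and> (\<forall>x\<in>H. \<forall>y\<in>H. x ** y \<in> H)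
     \<and> (\<forall>x\<in>H. matrix_inv x \<in> H)"

definition finite_index :: "(complex^2^2) set \<Rightarrow> (complex^2^2) set \<Rightarrow> bool" where
  "finite_index H G \<longleftrightarrow> finite {(\<lambda>h. g ** h) ` H | g. g \<in> G}"

definition commensurable :: "(complex^2^2) set \<Rightarrow> (complex^2^2) set \<Rightarrow> bool" where
  "commensurable A B \<longleftrightarrow> finite_index (A \<inter> B) A \<and> finite_index (A \<inter> B) B"

text \<open>Arithmetic subgroup of SL_2(F) = Res_{F/Q} SL_2 (Q): a subgroup commensurable with SL_2(O_F).\<close>
definition arithmetic_subgroup :: "complex set \<Rightarrow> (complex^2^2) set \<Rightarrow> bool" where
  "arithmetic_subgroup F \<Gamma> \<longleftrightarrow> is_subgroup \<Gamma> (SL2 F) \<and> commensurable \<Gamma> (SL2 (ring_of_integers F))"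

definition vec_in :: "complex set \<Rightarrow> complex^2 \<Rightarrow> bool" where
  "vec_in F v \<longleftrightarrow> (\<forall>i. v $ i \<in> F)"

text \<open>Rational points of the proper parabolic Q-subgroup of Res_{F/Q} SL_2 given by the
  stabiliser of the F-line F v (v a nonzero vector in F^2), and of its unipotent radical.\<close>
definition parabolic_pts :: "complex set \<Rightarrow> complex^2 \<Rightarrow> (complex^2^2) set" where
  "parabolic_pts F v = {g \<in> SL2 F. \<exists>c\<in>F. g *v v = c *s v}"

definition unipotent_radical_pts :: "complex set \<Rightarrow> complex^2 \<Rightarrow> (complex^2^2) set" where
  "unipotent_radical_pts F v = {g \<in> SL2 F. g *v v = v \<and>
      (\<forall>w. vec_in F w \<longrightarrow> (\<exists>c\<in>F. g *v w - w = c *s v))}"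

text \<open>H^1(G, R) = Hom(G, R) with trivial coefficients; homomorphisms are taken
  extensional (zero outside G).\<close>
definition H1 :: "(complex^2^2) set \<Rightarrow> ((complex^2^2) \<Rightarrow> 'r::ring_1) set" where
  "H1 G = {f. (\<forall>x\<in>G. \<forall>y\<in>G. f (x ** y) = f x + f y) \<and> (\<forall>x. x \<notin> G \<longrightarrow> f x = 0)}"

definition H1_iso :: "((complex^2^2) \<Rightarrow> 'r::ring_1) set \<Rightarrow> ((complex^2^2) \<Rightarrow> 'r) set \<Rightarrow> bool" where
  "H1_iso A B \<longleftrightarrow> (\<exists>\<phi>. bij_betw \<phi> A B \<and>
      (\<forall>f\<in>A. \<forall>g\<in>A. \<phi> (\<lambda>x. f x + g x) = (\<lambda>x. \<phi> f x + \<phi> g x)) \<and>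
      (\<forall>r. \<forall>f\<in>A. \<phi> (\<lambda>x. r * f x) = (\<lambda>x. r * \<phi> f x)))"

end

theory Submission
  imports Defs
begin

text \<open>
  An element \<open>x\<close> of \<open>\<Gamma>\<^sub>P\<close> acts on the line \<open>F v\<close> by a scalar
  \<open>c \<in> F\<close>. Since \<open>\<Gamma>\<close> is commensurable with \<open>SL\<^sub>2(O\<^sub>F)\<close>, two of
  the cosets \<open>x\<^sup>k (\<Gamma> \<inter> SL\<^sub>2(O\<^sub>F))\<close> coincide, which gives
  \<open>x\<^sup>n h = 1\<close> with \<open>n > 0\<close> and \<open>h \<in> SL\<^sub>2(O\<^sub>F)\<close>. Then
  \<open>c\<^sup>-\<^sup>n\<close> is an eigenvalue of \<open>h\<close>, a root of \<open>s\<^sup>2 - tr(h) s + 1\<close>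
  with integral \<open>tr(h)\<close>, so \<open>c\<^sup>n\<close> and \<open>c\<^sup>-\<^sup>n\<close> are integral and
  \<open>c\<close> is a unit of \<open>O\<^sub>F\<close>. Unless \<open>d\<close> is 1 or 3 the only units are
  \<open>\<plusminus>1\<close>, so every element of \<open>\<Gamma>\<^sub>P\<close> is \<open>\<plusminus>\<close> a unipotent
  matrix fixing \<open>v\<close>. Consequently \<open>\<Gamma>\<^sub>P\<close> is abelian and squares into
  \<open>\<Gamma>\<^sub>U\<close>, and restriction \<open>Hom(\<Gamma>\<^sub>P, R) \<rightarrow> Hom(\<Gamma>\<^sub>U, R)\<close>
  has the inverse \<open>h \<mapsto> (x \<mapsto> h(x\<^sup>2)/2)\<close>.
\<close>

section \<open>The field \<open>\<rat>(\<surd>-d)\<close>\<close>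

definition sqrt_neg :: "nat \<Rightarrow> complex" where
  "sqrt_neg d = \<i> * complex_of_real (sqrt (real d))"

lemma sqrt_neg_squared: "sqrt_neg d * sqrt_neg d = - of_nat d"
  unfolding sqrt_neg_def by (simp add: algebra_simps flip: of_real_mult)

lemma cnj_sqrt_neg [simp]: "cnj (sqrt_neg d) = - sqrt_neg d"
  unfolding sqrt_neg_def by simp

lemma Im_sqrt_neg [simp]: "Im (sqrt_neg d) = sqrt (real d)"
  unfolding sqrt_neg_def by simp

lemma cnj_of_rat [simp]: "cnj (of_rat r) = of_rat r"
  by (cases r) (simp add: of_rat_rat)

lemma Im_of_rat [simp]: "Im (of_rat r) = 0"
  by (cases r) (simp add: of_rat_rat)

lemma mult_cnj_eq_1_iff: "z * cnj z = 1 \<longleftrightarrow> cmod z = 1"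
proof -
  have "z * cnj z = 1 \<longleftrightarrow> cmod z ^ 2 = 1"
    by (metis complex_norm_square of_real_1 of_real_eq_iff)
  also have "\<dots> \<longleftrightarrow> cmod z = 1"
    using power_eq_iff_eq_base[of 2 "cmod z" 1] by simp
  finally show ?thesis .
qed

lemma imag_quad_field_iff:
  "x \<in> imag_quad_field d \<longleftrightarrow> (\<exists>a b. x = of_rat a + of_rat b * sqrt_neg d)"
  unfolding imag_quad_field_def sqrt_neg_def by simp

lemma imag_quad_fieldI: "x = of_rat a + of_rat b * sqrt_neg d \<Longrightarrow> x \<in> imag_quad_field d"
  using imag_quad_field_iff by blast

lemma imag_quad_fieldE:
  assumes "x \<in> imag_quad_field d"
  obtains a b where "x = of_rat a + of_rat b * sqrt_neg d"
  using assms imag_quad_field_iff by blast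

lemma imag_quad_field_of_rat: "of_rat r \<in> imag_quad_field d"
  by (rule imag_quad_fieldI[of _ r 0]) simp

lemma imag_quad_field_0: "0 \<in> imag_quad_field d"
  using imag_quad_field_of_rat[of 0] by simp

lemma imag_quad_field_1: "1 \<in> imag_quad_field d"
  using imag_quad_field_of_rat[of 1] by simp

lemma imag_quad_field_add:
  assumes "x \<in> imag_quad_field d" "y \<in> imag_quad_field d"
  shows "x + y \<in> imag_quad_field d"
proof -
  obtain a b a' b' where "x = of_rat a + of_rat b * sqrt_neg d" "y = of_rat a' + of_rat b' * sqrt_neg d"
    using assms by (metis imag_quad_fieldE)
  then show ?thesis
    by (intro imag_quad_fieldI[of _ "a + a'" "b + b'"]) (simp add: of_rat_add algebra_simps)
qed

lemma imag_quad_field_minus: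
  assumes "x \<in> imag_quad_field d"
  shows "- x \<in> imag_quad_field d"
proof -
  obtain a b where "x = of_rat a + of_rat b * sqrt_neg d"
    using assms by (metis imag_quad_fieldE)
  then show ?thesis
    by (intro imag_quad_fieldI[of _ "- a" "- b"]) (simp add: of_rat_minus)
qed

lemma imag_quad_field_diff:
  "x \<in> imag_quad_field d \<Longrightarrow> y \<in> imag_quad_field d \<Longrightarrow> x - y \<in> imag_quad_field d"
  using imag_quad_field_add[OF _ imag_quad_field_minus] by (metis diff_conv_add_uminus)

lemma imag_quad_field_mult:
  assumes "x \<in> imag_quad_field d" "y \<in> imag_quad_field d"
  shows "x * y \<in> imag_quad_field d"
proof -
  obtain a b a' b' where xy: "x = of_rat a + of_rat b * sqrt_neg d" "y = of_rat a' + of_rat b' * sqrt_neg d"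
    using assms by (metis imag_quad_fieldE)
  have "x * y = of_rat a * of_rat a' + of_rat b * of_rat b' * (sqrt_neg d * sqrt_neg d)
      + (of_rat a * of_rat b' + of_rat b * of_rat a') * sqrt_neg d"
    unfolding xy by (simp add: algebra_simps)
  also have "\<dots> = of_rat (a * a' - of_nat d * b * b') + of_rat (a * b' + b * a') * sqrt_neg d"
    by (simp add: sqrt_neg_squared of_rat_add of_rat_mult of_rat_diff algebra_simps)
  finally show ?thesis by (rule imag_quad_fieldI)
qed

lemma imag_quad_field_power: "x \<in> imag_quad_field d \<Longrightarrow> x ^ n \<in> imag_quad_field d"
  by (induction n) (simp_all add: imag_quad_field_1 imag_quad_field_mult)

lemma imag_quad_field_cnj:
  assumes "x \<in> imag_quad_field d"
  shows "cnj x \<in> imag_quad_field d"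
proof -
  obtain a b where "x = of_rat a + of_rat b * sqrt_neg d"
    using assms by (metis imag_quad_fieldE)
  then show ?thesis
    by (intro imag_quad_fieldI[of _ a "- b"]) (simp add: of_rat_minus)
qed

lemma imag_quad_field_norm:
  assumes "x \<in> imag_quad_field d"
  obtains r where "x * cnj x = of_rat r" "r \<ge> 0"
proof -
  obtain a b where x: "x = of_rat a + of_rat b * sqrt_neg d"
    using assms by (metis imag_quad_fieldE)
  have "x * cnj x = of_rat a * of_rat a - of_rat b * of_rat b * (sqrt_neg d * sqrt_neg d)"
    unfolding x by (simp add: algebra_simps)
  also have "\<dots> = of_rat (a * a + of_nat d * b * b)"
    by (simp add: sqrt_neg_squared of_rat_add of_rat_mult algebra_simps)
  finally show ?thesis
    using that by (simp add: mult.assoc)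
qed

lemma imag_quad_field_inverse:
  assumes "x \<in> imag_quad_field d"
  shows "inverse x \<in> imag_quad_field d"
proof (cases "x = 0")
  case True
  then show ?thesis using imag_quad_field_0 by simp
next
  case False
  obtain r where r: "x * cnj x = of_rat r"
    using imag_quad_field_norm[OF assms] by blast
  with False have "r \<noteq> 0" by auto
  with r have "x * (cnj x * of_rat (inverse r)) = 1"
    by (simp flip: mult.assoc of_rat_mult)
  then have "inverse x = cnj x * of_rat (inverse r)"
    by (rule inverse_unique)
  then show ?thesis
    using imag_quad_field_mult[OF imag_quad_field_cnj[OF assms] imag_quad_field_of_rat] by simp
qed

lemma imag_quad_field_divide:
  "x \<in> imag_quad_field d \<Longrightarrow> y \<in> imag_quad_field d \<Longrightarrow> x / y \<in> imag_quad_field d"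
  by (simp add: divide_inverse imag_quad_field_mult imag_quad_field_inverse)

section \<open>Integrality via bounded denominators\<close>

definition quad_order :: "nat \<Rightarrow> complex set" where
  "quad_order d = {of_int p + of_int q * sqrt_neg d | p q. True}"

lemma quad_orderI: "z = of_int p + of_int q * sqrt_neg d \<Longrightarrow> z \<in> quad_order d"
  unfolding quad_order_def by blast

lemma quad_orderE:
  assumes "z \<in> quad_order d"
  obtains p q where "z = of_int p + of_int q * sqrt_neg d"
  using assms unfolding quad_order_def by blast

lemma quad_order_of_int: "of_int m \<in> quad_order d"
  by (rule quad_orderI[of _ m 0]) simp

lemma quad_order_add:
  assumes "x \<in> quad_order d" "y \<in> quad_order d"
  shows "x + y \<in> quad_order d"
proof -
  obtain p q p' q' where "x = of_int p + of_int q * sqrt_neg d" "y = of_int p' + of_int q' * sqrt_neg d"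
    using assms by (metis quad_orderE)
  then show ?thesis
    by (intro quad_orderI[of _ "p + p'" "q + q'"]) (simp add: algebra_simps)
qed

lemma quad_order_mult:
  assumes "x \<in> quad_order d" "y \<in> quad_order d"
  shows "x * y \<in> quad_order d"
proof -
  obtain p q p' q' where xy: "x = of_int p + of_int q * sqrt_neg d" "y = of_int p' + of_int q' * sqrt_neg d"
    using assms by (metis quad_orderE)
  have "x * y = of_int p * of_int p' + of_int q * of_int q' * (sqrt_neg d * sqrt_neg d)
      + (of_int p * of_int q' + of_int q * of_int p') * sqrt_neg d"
    unfolding xy by (simp add: algebra_simps)
  also have "\<dots> = of_int (p * p' - int d * q * q') + of_int (p * q' + q * p') * sqrt_neg d"
    by (simp add: sqrt_neg_squared algebra_simps)
  finally show ?thesis by (rule quad_orderI)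
qed

lemma quad_order_minus: "z \<in> quad_order d \<Longrightarrow> - z \<in> quad_order d"
  using quad_order_mult[OF quad_order_of_int[of "-1"]] by simp

lemma quad_order_power: "z \<in> quad_order d \<Longrightarrow> z ^ n \<in> quad_order d"
  by (induction n) (auto intro: quad_order_mult simp: quad_order_of_int[of 1, simplified])

lemma quad_order_sum:
  "(\<And>i. i \<in> A \<Longrightarrow> f i \<in> quad_order d) \<Longrightarrow> (\<Sum>i\<in>A. f i) \<in> quad_order d"
  by (induction A rule: infinite_finite_induct)
    (auto intro: quad_order_add simp: quad_order_of_int[of 0, simplified])

lemma quad_order_cnj:
  assumes "z \<in> quad_order d"
  shows "cnj z \<in> quad_order d"
proof -
  obtain p q where "z = of_int p + of_int q * sqrt_neg d"
    using assms by (metis quad_orderE)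
  then show ?thesis
    by (intro quad_orderI[of _ p "- q"]) simp
qed

lemma quad_order_real:
  assumes "z \<in> quad_order d" "Im z = 0" "d > 0"
  shows "z \<in> \<int>"
proof -
  obtain p q where z: "z = of_int p + of_int q * sqrt_neg d"
    using assms(1) by (metis quad_orderE)
  with assms(2,3) have "q = 0" by simp
  with z show ?thesis by simp
qed

lemma imag_quad_field_denom:
  assumes "z \<in> imag_quad_field d"
  obtains K :: int where "K > 0" "of_int K * z \<in> quad_order d"
proof -
  obtain a b where z: "z = of_rat a + of_rat b * sqrt_neg d"
    using assms by (metis imag_quad_fieldE)
  obtain p1 q1 where a: "a = of_int p1 / of_int q1" "q1 > 0"
    by (cases a) (auto simp: Fract_of_int_quotient)
  obtain p2 q2 where b: "b = of_int p2 / of_int q2" "q2 > 0"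
    by (cases b) (auto simp: Fract_of_int_quotient)
  have "of_int (q1 * q2) * z = of_int (p1 * q2) + of_int (p2 * q1) * sqrt_neg d"
    unfolding z a b using a(2) b(2) by (simp add: of_rat_divide field_simps)
  then have "of_int (q1 * q2) * z \<in> quad_order d"
    by (rule quad_orderI)
  moreover have "q1 * q2 > 0"
    using a(2) b(2) by simp
  ultimately show ?thesis
    using that by blast
qed

text \<open>
  An element \<open>z\<close> of \<open>F\<close> is an algebraic integer iff its powers have a common denominator
  over \<open>\<int>[\<surd>-d]\<close>; unlike integrality via monic polynomials, this is visibly closed under
  sums and products. That \<open>\<int>[\<surd>-d]\<close> may be smaller than \<open>O\<^sub>F\<close> does not matter, as it has
  finite index.
\<close>

definition bounded_denom :: "nat \<Rightarrow> complex \<Rightarrow> bool" where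
  "bounded_denom d z \<longleftrightarrow> (\<exists>K::int. K > 0 \<and> (\<forall>k. of_int K * z ^ k \<in> quad_order d))"

lemma bounded_denomI: "K > 0 \<Longrightarrow> (\<And>k. of_int K * z ^ k \<in> quad_order d) \<Longrightarrow> bounded_denom d z"
  unfolding bounded_denom_def by blast

lemma bounded_denomE:
  assumes "bounded_denom d z"
  obtains K :: int where "K > 0" "\<And>k. of_int K * z ^ k \<in> quad_order d"
  using assms unfolding bounded_denom_def by blast

lemma quad_order_scale:
  "of_int K * z \<in> quad_order d \<Longrightarrow> of_int (e * K) * z \<in> quad_order d"
  using quad_order_mult[OF quad_order_of_int[of e]] by (simp add: mult.assoc)

lemma bounded_denom_mult:
  assumes "bounded_denom d a" "bounded_denom d b"
  shows "bounded_denom d (a * b)"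
proof -
  obtain K M :: int where "K > 0" "M > 0"
    and K: "\<And>k. of_int K * a ^ k \<in> quad_order d" and M: "\<And>k. of_int M * b ^ k \<in> quad_order d"
    using assms by (metis bounded_denomE)
  have "of_int (K * M) * (a * b) ^ k = (of_int K * a ^ k) * (of_int M * b ^ k)" for k
    by (simp add: power_mult_distrib algebra_simps)
  then have "of_int (K * M) * (a * b) ^ k \<in> quad_order d" for k
    using K M by (simp only: quad_order_mult)
  then show ?thesis
    using \<open>K > 0\<close> \<open>M > 0\<close> by (intro bounded_denomI[of "K * M"]) simp_all
qed

lemma bounded_denom_cnj:
  assumes "bounded_denom d z"
  shows "bounded_denom d (cnj z)"
proof -
  obtain K :: int where "K > 0" and K: "\<And>k. of_int K * z ^ k \<in> quad_order d"
    using assms by (metis bounded_denomE)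
  have "of_int K * cnj z ^ k = cnj (of_int K * z ^ k)" for k
    by simp
  then have "of_int K * cnj z ^ k \<in> quad_order d" for k
    using K by (simp only: quad_order_cnj)
  with \<open>K > 0\<close> show ?thesis
    by (rule bounded_denomI)
qed

lemma bounded_denom_add:
  assumes "bounded_denom d a" "bounded_denom d b"
  shows "bounded_denom d (a + b)"
proof -
  obtain K M :: int where "K > 0" "M > 0"
    and K: "\<And>k. of_int K * a ^ k \<in> quad_order d" and M: "\<And>k. of_int M * b ^ k \<in> quad_order d"
    using assms by (metis bounded_denomE)
  have "of_int (K * M) * (a + b) ^ k
      = (\<Sum>i\<le>k. of_int (int (k choose i)) * ((of_int K * a ^ i) * (of_int M * b ^ (k - i))))" for k
    by (simp add: binomial_ring sum_distrib_left algebra_simps)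
  then show ?thesis
    using \<open>K > 0\<close> \<open>M > 0\<close> K M
    by (intro bounded_denomI[of "K * M"])
      (simp_all only: quad_order_sum quad_order_mult quad_order_of_int mult_pos_pos)
qed

lemma bounded_denom_root:
  assumes "z \<in> imag_quad_field d" "n > 0" "bounded_denom d (z ^ n)"
  shows "bounded_denom d z"
proof -
  obtain G :: int where "G > 0" and G: "of_int G * z \<in> quad_order d"
    using assms(1) by (metis imag_quad_field_denom)
  obtain K :: int where "K > 0" and K: "\<And>k. of_int K * (z ^ n) ^ k \<in> quad_order d"
    using assms(3) by (metis bounded_denomE)
  have "of_int (K * G ^ n) * z ^ k \<in> quad_order d" for k
  proof -
    define q r where "q = k div n" and "r = k mod n"
    have "r < n" "k = n * q + r"
      using assms(2) unfolding q_def r_def by simp_all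
    then have "of_int (K * G ^ n) * z ^ k
        = of_int (G ^ (n - r)) * (of_int K * (z ^ n) ^ q) * (of_int G * z) ^ r"
      by (simp add: power_add power_mult power_mult_distrib mult_ac
          flip: power_add[of "of_int G :: complex"])
    also have "\<dots> \<in> quad_order d"
      by (meson quad_order_mult quad_order_of_int quad_order_power K G)
    finally show ?thesis .
  qed
  then show ?thesis
    using \<open>K > 0\<close> \<open>G > 0\<close> by (intro bounded_denomI[of "K * G ^ n"]) simp_all
qed

lemma Ints_of_bounded_denom_rat:
  fixes r :: rat and K :: int
  assumes "K > 0" "\<And>k. of_int K * r ^ k \<in> \<int>"
  shows "r \<in> \<int>"
proof -
  obtain a b where r: "r = of_int a / of_int b" "b > 0" "coprime a b"
    by (cases r) (auto simp: Fract_of_int_quotient)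
  have "b ^ k dvd K" for k
  proof -
    obtain p where "of_int K * r ^ k = of_int p"
      using assms(2) by (metis Ints_cases)
    then have "of_int (K * a ^ k) = (of_int (p * b ^ k) :: rat)"
      using r(2) by (simp add: r(1) power_divide divide_eq_eq)
    then have "b ^ k dvd K * a ^ k"
      by (metis dvd_triv_right of_int_eq_iff)
    moreover have "coprime (b ^ k) (a ^ k)"
      using r(3) by (simp add: coprime_commute)
    ultimately show ?thesis
      by (metis coprime_dvd_mult_left_iff)
  qed
  have "b = 1"
  proof (rule ccontr)
    assume "b \<noteq> 1"
    with r(2) have "2 ^ nat K \<le> b ^ nat K"
      by (intro power_mono) simp_all
    also have "\<dots> \<le> K"
      using \<open>b ^ nat K dvd K\<close> assms(1) by (rule zdvd_imp_le)
    finally show False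
      using of_nat_less_two_power[of "nat K"] assms(1) by simp
  qed
  then show ?thesis
    using r(1) by simp
qed

lemma bounded_denom_of_rat:
  assumes "bounded_denom d (of_rat r)" "d > 0"
  shows "r \<in> \<int>"
proof -
  obtain K :: int where "K > 0" and K: "\<And>k. of_int K * of_rat r ^ k \<in> quad_order d"
    using assms(1) by (metis bounded_denomE)
  have "of_int K * r ^ k \<in> \<int>" for k
  proof -
    have "(of_rat (of_int K * r ^ k) :: complex) \<in> \<int>"
      using quad_order_real[OF K _ assms(2)] by (simp add: of_rat_mult of_rat_power)
    then show ?thesis
      by (metis Ints_cases Ints_of_int of_rat_eq_iff of_rat_of_int_eq)
  qed
  with \<open>K > 0\<close> show ?thesis
    by (rule Ints_of_bounded_denom_rat)
qed

lemma alg_int_of_int: "alg_int (of_int m)"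
  unfolding alg_int_def by (rule exI[of _ "[:- m, 1:]"]) (simp add: map_poly_pCons)

lemma alg_int_bounded_denom:
  assumes "alg_int z" "z \<in> imag_quad_field d"
  shows "bounded_denom d z"
proof -
  obtain p :: "int poly" where monic: "lead_coeff p = 1" and root: "poly (map_poly of_int p) z = 0"
    using assms(1) unfolding alg_int_def by blast
  define n where "n = degree p"
  have "degree (map_poly (of_int :: int \<Rightarrow> complex) p) = n"
    unfolding n_def by (rule degree_map_poly) simp
  with root have sum: "(\<Sum>i\<le>n. of_int (coeff p i) * z ^ i) = 0"
    by (simp add: poly_altdef coeff_map_poly)
  then have "n > 0"
    using monic unfolding n_def by (cases "degree p") simp_all
  have z_n: "z ^ n = - (\<Sum>i<n. of_int (coeff p i) * z ^ i)"
    using sum monic by (simp add: n_def lessThan_Suc_atMost[symmetric] eq_neg_iff_add_eq_0 add.commute)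
  have "\<forall>j. \<exists>K::int. K > 0 \<and> of_int K * z ^ j \<in> quad_order d"
    using imag_quad_field_denom[OF imag_quad_field_power[OF assms(2)]] by metis
  then obtain Ks :: "nat \<Rightarrow> int" where Ks: "\<And>j. Ks j > 0" "\<And>j. of_int (Ks j) * z ^ j \<in> quad_order d"
    by metis
  define K where "K = (\<Prod>j<n. Ks j)"
  have "K > 0"
    unfolding K_def by (rule prod_pos) (use Ks(1) in auto)
  have "of_int K * z ^ k \<in> quad_order d" for k
  proof (induction k rule: less_induct)
    case (less k)
    show ?case
    proof (cases "k < n")
      case True
      then obtain e where "K = e * Ks k"
        unfolding K_def by (metis dvd_prodI finite_lessThan lessThan_iff dvd_def mult.commute)
      then show ?thesis
        using quad_order_scale[OF Ks(2)] by simp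
    next
      case False
      then have "z ^ k = z ^ (k - n) * z ^ n"
        by (simp flip: power_add)
      also have "\<dots> = - (\<Sum>i<n. of_int (coeff p i) * z ^ (k - n + i))"
        unfolding z_n by (simp add: sum_distrib_left power_add algebra_simps)
      finally have "of_int K * z ^ k = - (\<Sum>i<n. of_int (coeff p i) * (of_int K * z ^ (k - n + i)))"
        by (simp add: sum_distrib_left algebra_simps)
      also have "\<dots> \<in> quad_order d"
        by (intro quad_order_minus quad_order_sum quad_order_mult quad_order_of_int less.IH)
          (use False \<open>n > 0\<close> in auto)
      finally show ?thesis .
    qed
  qed
  with \<open>K > 0\<close> show ?thesis
    by (rule bounded_denomI)
qed

section \<open>Units of norm one\<close>

inductive_set int_adjoin :: "complex \<Rightarrow> complex set" for t where
  int_adjoin_power: "t ^ i \<in> int_adjoin t"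
| int_adjoin_add: "a \<in> int_adjoin t \<Longrightarrow> b \<in> int_adjoin t \<Longrightarrow> a + b \<in> int_adjoin t"
| int_adjoin_minus: "a \<in> int_adjoin t \<Longrightarrow> - a \<in> int_adjoin t"

lemma int_adjoin_0: "0 \<in> int_adjoin t"
  using int_adjoin_add[OF int_adjoin_power int_adjoin_minus[OF int_adjoin_power], of t 0 0] by simp

lemma int_adjoin_1: "1 \<in> int_adjoin t"
  using int_adjoin_power[of t 0] by simp

lemma int_adjoin_mult_generator: "a \<in> int_adjoin t \<Longrightarrow> t * a \<in> int_adjoin t"
proof (induction rule: int_adjoin.induct)
  case (int_adjoin_power i)
  then show ?case using int_adjoin.int_adjoin_power[of t "Suc i"] by simp
next
  case (int_adjoin_add a b)
  then show ?case using int_adjoin.int_adjoin_add by (simp add: distrib_left)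
next
  case (int_adjoin_minus a)
  then show ?case using int_adjoin.int_adjoin_minus by simp
qed

lemma int_adjoin_denom:
  "a \<in> int_adjoin t \<Longrightarrow> (\<And>k. of_int K * t ^ k \<in> quad_order d) \<Longrightarrow> of_int K * a \<in> quad_order d"
  by (induction rule: int_adjoin.induct) (auto simp: distrib_left intro: quad_order_add quad_order_minus)

lemma bounded_denom_quadratic_root:
  assumes "bounded_denom d t" "s \<in> imag_quad_field d" "s * s - t * s + 1 = 0"
  shows "bounded_denom d s"
proof -
  obtain K :: int where "K > 0" and K: "\<And>k. of_int K * t ^ k \<in> quad_order d"
    using assms(1) by (metis bounded_denomE)
  obtain G :: int where "G > 0" and G: "of_int G * s \<in> quad_order d"
    using assms(2) by (metis imag_quad_field_denom)
  have "\<exists>a\<in>int_adjoin t. \<exists>b\<in>int_adjoin t. s ^ k = a + b * s" for k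
  proof (induction k)
    case 0
    show ?case using int_adjoin_0 int_adjoin_1 by force
  next
    case (Suc k)
    then obtain a b where ab: "a \<in> int_adjoin t" "b \<in> int_adjoin t" "s ^ k = a + b * s"
      by blast
    have "s ^ Suc k = a * s + b * (s * s)"
      using ab(3) by (simp add: algebra_simps)
    also have "s * s = t * s - 1"
      using assms(3) by (simp add: algebra_simps eq_neg_iff_add_eq_0)
    finally have "s ^ Suc k = - b + (a + t * b) * s"
      by (simp add: algebra_simps)
    moreover have "- b \<in> int_adjoin t" "a + t * b \<in> int_adjoin t"
      using ab by (auto intro: int_adjoin_minus int_adjoin_add int_adjoin_mult_generator)
    ultimately show ?case by blast
  qed
  have "of_int (G * K) * s ^ k \<in> quad_order d" for k
  proof -
    obtain a b where ab: "a \<in> int_adjoin t" "b \<in> int_adjoin t" "s ^ k = a + b * s"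
      using \<open>\<exists>a\<in>int_adjoin t. \<exists>b\<in>int_adjoin t. s ^ k = a + b * s\<close> by blast
    have "of_int (G * K) * s ^ k = of_int G * (of_int K * a) + (of_int K * b) * (of_int G * s)"
      unfolding ab(3) by (simp add: algebra_simps)
    also have "\<dots> \<in> quad_order d"
      by (meson quad_order_add quad_order_mult quad_order_of_int G
          int_adjoin_denom[OF ab(1) K] int_adjoin_denom[OF ab(2) K])
    finally show ?thesis .
  qed
  then show ?thesis
    using \<open>K > 0\<close> \<open>G > 0\<close> by (intro bounded_denomI[of "G * K"]) simp_all
qed

lemma bounded_denom_norm:
  assumes "s \<in> imag_quad_field d" "bounded_denom d s" "d > 0"
  obtains n :: nat where "s * cnj s = of_nat n"
proof -
  obtain r where r: "s * cnj s = of_rat r" "r \<ge> 0"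
    using assms(1) by (rule imag_quad_field_norm)
  have "bounded_denom d (of_rat r)"
    using bounded_denom_mult[OF assms(2) bounded_denom_cnj[OF assms(2)]] r(1) by simp
  then obtain m where "r = of_int m"
    using bounded_denom_of_rat assms(3) by (metis Ints_cases)
  with r have "s * cnj s = of_nat (nat m)"
    by (simp add: of_rat_of_int_eq)
  then show ?thesis ..
qed

lemma quadratic_unit:
  assumes "bounded_denom d t" "s \<in> imag_quad_field d" "s * s - t * s + 1 = 0" "d > 0"
  shows "bounded_denom d s" "s * cnj s = 1"
proof -
  show s: "bounded_denom d s"
    using assms(1-3) by (rule bounded_denom_quadratic_root)
  have "s \<noteq> 0"
    using assms(3) by auto
  define u where "u = inverse s"
  have su: "s * u = 1"
    using \<open>s \<noteq> 0\<close> unfolding u_def by simp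
  have "u * u - t * u + 1 = (u * u) * (s * s - t * s + 1)"
    using su by (simp add: algebra_simps)
  then have "u * u - t * u + 1 = 0"
    using assms(3) by simp
  then have u: "bounded_denom d u"
    using assms(1) imag_quad_field_inverse[OF assms(2)] unfolding u_def
    by (blast intro: bounded_denom_quadratic_root)
  obtain m n where "s * cnj s = of_nat m" "u * cnj u = of_nat n"
    using bounded_denom_norm[OF assms(2) s assms(4)]
      bounded_denom_norm[OF imag_quad_field_inverse[OF assms(2)] _ assms(4)] u
    unfolding u_def by metis
  moreover have "(s * cnj s) * (u * cnj u) = 1"
    using su by (metis complex_cnj_mult complex_cnj_one mult.commute mult.left_commute mult_1)
  ultimately have "m * n = 1"
    by (metis of_nat_1 of_nat_eq_iff of_nat_mult)
  then show "s * cnj s = 1"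
    using \<open>s * cnj s = of_nat m\<close> by simp
qed

lemma squarefree_eq_of_rat_square_multiple:
  fixes d m :: nat and b :: rat
  assumes "squarefree d" "squarefree m" "of_nat d * b ^ 2 = of_nat m"
  shows "d = m"
proof -
  obtain p q where pq: "quotient_of b = (p, q)"
    by (cases "quotient_of b")
  have b: "b = of_int p / of_int q" and "q > 0" and "coprime p q"
    using pq quotient_of_div quotient_of_denom_pos quotient_of_coprime by blast+
  define P Q where "P = nat \<bar>p\<bar>" and "Q = nat q"
  have "coprime P Q"
    using \<open>coprime p q\<close> \<open>q > 0\<close> unfolding P_def Q_def
    by (simp add: coprime_int_iff[symmetric] coprime_abs_left_iff)
  have "of_nat d * of_int p ^ 2 = (of_nat m * of_int q ^ 2 :: rat)"
    using assms(3) \<open>q > 0\<close> unfolding b by (simp add: field_simps power_divide)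
  then have "int d * p ^ 2 = int m * q ^ 2"
    by (simp only: of_int_eq_iff[symmetric, where 'a = rat] of_int_mult of_int_of_nat_eq of_int_power)
  then have "int (d * P ^ 2) = int (m * Q ^ 2)"
    using \<open>q > 0\<close> unfolding P_def Q_def by (simp add: power2_abs)
  then have eq: "d * P ^ 2 = m * Q ^ 2"
    by (simp only: of_nat_eq_iff)
  then have "P ^ 2 dvd m * Q ^ 2"
    by (simp flip: eq)
  then have "P ^ 2 dvd m"
    using \<open>coprime P Q\<close> by (simp add: coprime_dvd_mult_left_iff)
  then have "P = 1"
    using squarefreeD[OF assms(2)] by simp
  with eq have d: "d = m * Q ^ 2"
    by simp
  then have "Q = 1"
    using squarefreeD[OF assms(1), of Q] by simp
  with d show ?thesis
    by simp
qed

lemma imag_quad_unit_eq_pm1: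
  assumes "c \<in> imag_quad_field d" "c * cnj c = 1" "bounded_denom d c"
    and "squarefree d" "d \<noteq> 1" "d \<noteq> 3"
  shows "c = 1 \<or> c = -1"
proof -
  have "d > 0"
    using assms(4) by (cases d) simp_all
  obtain a b where c: "c = of_rat a + of_rat b * sqrt_neg d"
    using assms(1) by (metis imag_quad_fieldE)
  have "c + cnj c = of_rat (2 * a)"
    unfolding c by (simp add: of_rat_mult)
  moreover have "bounded_denom d (c + cnj c)"
    using assms(3) by (intro bounded_denom_add bounded_denom_cnj)
  ultimately obtain m where m: "2 * a = of_int m"
    using bounded_denom_of_rat \<open>d > 0\<close> by (metis Ints_cases)
  have "c * cnj c = of_rat a * of_rat a - of_rat b * of_rat b * (sqrt_neg d * sqrt_neg d)"
    unfolding c by (simp add: algebra_simps)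
  also have "\<dots> = of_rat (a ^ 2 + of_nat d * b ^ 2)"
    by (simp add: sqrt_neg_squared of_rat_add of_rat_mult power2_eq_square algebra_simps)
  finally have norm: "a ^ 2 + of_nat d * b ^ 2 = 1"
    using assms(2) by (metis of_rat_1 of_rat_eq_iff)
  have m_sq: "of_int (m ^ 2) = 4 * a ^ 2"
    by (simp flip: m add: power_mult_distrib)
  have "of_nat d * b ^ 2 \<ge> (0 :: rat)"
    by simp
  with norm have "4 * a ^ 2 \<le> (4 :: rat)"
    by linarith
  with m_sq have "m ^ 2 \<le> 4"
    by linarith
  then have "\<bar>m\<bar> \<le> 2"
    using abs_le_square_iff[of m 2] by simp
  then consider "m = 0" | "\<bar>m\<bar> = 1" | "\<bar>m\<bar> = 2"
    by linarith
  then show ?thesis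
  proof cases
    case 1
    then have "of_nat d * b ^ 2 = of_nat 1"
      using norm m by simp
    then have "d = 1"
      using squarefree_eq_of_rat_square_multiple[OF assms(4)] by simp
    with assms(5) show ?thesis ..
  next
    case 2
    then have "m ^ 2 = 1"
      using power2_abs[of m] by simp
    with m_sq have "4 * a ^ 2 = 1"
      by simp
    then have "of_nat d * (2 * b) ^ 2 = of_nat 3"
      using norm by (simp add: power_mult_distrib algebra_simps)
    moreover have "squarefree (3 :: nat)"
      by (simp add: squarefree_prime)
    ultimately have "d = 3"
      using squarefree_eq_of_rat_square_multiple[OF assms(4)] by blast
    with assms(6) show ?thesis ..
  next
    case 3
    then have "m ^ 2 = 4"
      using power2_abs[of m] by simp
    with m_sq have "4 * a ^ 2 = 4"
      by simp
    then have "a = 1 \<or> a = -1" and "b = 0"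
      using norm \<open>d > 0\<close> by (auto simp: power2_eq_1_iff)
    then show ?thesis
      using c by auto
  qed
qed

lemma trace_2: "trace (A :: 'a::semiring_1^2^2) = A$1$1 + A$2$2"
  by (simp add: trace_def sum_2)

lemma matrix_vector_mult_2: "((A :: 'a::semiring_1^2^2) *v x) $ i = A$i$1 * x$1 + A$i$2 * x$2"
  by (simp add: matrix_vector_mult_def sum_2)

lemma matrix_matrix_mult_2: "((A :: 'a::semiring_1^2^2) ** B) $ i $ j = A$i$1 * B$1$j + A$i$2 * B$2$j"
  by (simp add: matrix_matrix_mult_def sum_2)

lemma eigenvalue_char_poly_2:
  fixes A :: "'a::field^2^2"
  assumes "A *v v = c *s v" "v \<noteq> 0"
  shows "c * c - trace A * c + det A = 0"
proof -
  have "(A - mat c) *v v = 0"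
    using assms(1) by (simp add: vec_eq_iff matrix_vector_mult_2 mat_def forall_2 algebra_simps)
  then have "\<not> invertible (A - mat c)"
    using assms(2) by (metis invertible_left_inverse matrix_left_invertible_ker)
  then have "det (A - mat c) = 0"
    by (simp add: invertible_det_nz)
  then show ?thesis
    by (simp add: det_2 trace_2 mat_def algebra_simps)
qed

lemma inverse_eigenvalue_char_poly_2:
  fixes A B :: "'a::field^2^2"
  assumes "A ** B = mat 1" "A *v v = c *s v" "v \<noteq> 0" "det B = 1"
  shows "c * c - trace B * c + 1 = 0"
proof -
  have "B ** A = mat 1"
    using assms(1) by (simp add: matrix_left_right_inverse)
  then have "v = B *v (A *v v)"
    by (simp add: matrix_vector_mul_assoc)
  also have "\<dots> = c *s (B *v v)"
    by (simp add: assms(2) vector_scalar_commute)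
  finally have v: "v = c *s (B *v v)" .
  with assms(3) have "c \<noteq> 0"
    by auto
  with v have "B *v v = inverse c *s v"
    by (metis vector_smult_assoc left_inverse vector_smult_lid)
  then have "inverse c * inverse c - trace B * inverse c + 1 = 0"
    using eigenvalue_char_poly_2 assms(3,4) by metis
  moreover have "c * c * (inverse c * inverse c - trace B * inverse c + 1)
      = (c * inverse c) * (c * inverse c) - trace B * c * (c * inverse c) + c * c"
    by (simp add: algebra_simps)
  ultimately have "1 - trace B * c + c * c = 0"
    using \<open>c \<noteq> 0\<close> by simp
  then show ?thesis
    by (simp add: algebra_simps)
qed

lemma parallel_2:
  fixes u v :: "'a::field^2"
  assumes "u$1 * v$2 = u$2 * v$1" "v$k \<noteq> 0"
  shows "u = (u$k / v$k) *s v"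
proof -
  have "k = 1 \<or> k = 2"
    by (rule exhaust_2)
  with assms show ?thesis
    by (auto simp: vec_eq_iff forall_2 field_simps)
qed

lemma pm_unipotent_image:
  fixes y :: "'a::field^2^2"
  assumes "det y = 1" "y *v v = e *s v" "e * e = 1" "v \<noteq> 0"
  obtains l where "y *v w = e *s w + l *s v"
proof -
  have "e * e - (y$1$1 + y$2$2) * e + 1 = 0"
    using eigenvalue_char_poly_2[OF assms(2,4)] assms(1) by (simp add: trace_2)
  then have tr: "y$1$1 + y$2$2 = 2 * e"
    using assms(3) by algebra
  have e1: "(y$1$1 - e) * v$1 + y$1$2 * v$2 = 0" and e2: "y$2$1 * v$1 + (y$2$2 - e) * v$2 = 0"
    using assms(2) by (simp_all add: vec_eq_iff forall_2 matrix_vector_mult_2 algebra_simps)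
  define u where "u = y *v w - e *s w"
  have "u$1 * v$2 = u$2 * v$1"
    unfolding u_def using e1 e2 tr by (simp add: matrix_vector_mult_2) algebra
  moreover obtain k where "v$k \<noteq> 0"
    using assms(4) by (metis vec_eq_iff zero_index)
  ultimately have "u = (u$k / v$k) *s v"
    by (rule parallel_2)
  then show ?thesis
    using that unfolding u_def by (metis add_diff_cancel_left' diff_add_cancel)
qed

lemma pm_unipotent_commute:
  fixes x y :: "'a::field^2^2"
  assumes "det x = 1" "x *v v = e *s v" "e * e = 1"
    and "det y = 1" "y *v v = f *s v" "f * f = 1" and "v \<noteq> 0"
  shows "x ** y = y ** x"
proof (rule matrix_eq[THEN iffD2], rule allI)
  fix w
  obtain l where xw: "x *v w = e *s w + l *s v"
    using pm_unipotent_image[OF assms(1-3,7)] .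
  obtain m where yw: "y *v w = f *s w + m *s v"
    using pm_unipotent_image[OF assms(4-7)] .
  have "(x ** y) *v w = f *s (e *s w + l *s v) + m *s (e *s v)"
    by (simp flip: matrix_vector_mul_assoc add: yw matrix_vector_right_distrib vector_scalar_commute xw assms(2))
  moreover have "(y ** x) *v w = e *s (f *s w + m *s v) + l *s (f *s v)"
    by (simp flip: matrix_vector_mul_assoc add: xw matrix_vector_right_distrib vector_scalar_commute yw assms(5))
  ultimately show "(x ** y) *v w = (y ** x) *v w"
    by (simp add: vec_eq_iff algebra_simps)
qed

fun mat_pow :: "'a::semiring_1^'n^'n \<Rightarrow> nat \<Rightarrow> 'a^'n^'n" where
  "mat_pow x 0 = mat 1"
| "mat_pow x (Suc k) = x ** mat_pow x k"

lemma mat_pow_add: "mat_pow x (i + j) = mat_pow x i ** mat_pow x j"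
  by (induction i) (simp_all add: matrix_mul_assoc)

lemma det_mat_pow: "det (mat_pow x k) = det x ^ k"
  by (induction k) (simp_all add: det_mul)

lemma mat_pow_eigenvector:
  fixes x :: "'a::field^'n^'n"
  assumes "x *v v = c *s v"
  shows "mat_pow x k *v v = c ^ k *s v"
proof (induction k)
  case (Suc k)
  have "mat_pow x (Suc k) *v v = c ^ k *s (x *v v)"
    by (simp flip: matrix_vector_mul_assoc add: Suc vector_scalar_commute)
  then show ?case
    by (simp add: assms mult.commute)
qed simp

lemma mat_pow_inverse_in_finite_index:
  fixes x :: "'a::field^'n^'n"
  assumes "finite {(\<lambda>h. g ** h) ` H | g. g \<in> G}" "\<And>k. mat_pow x k \<in> G"
    and "mat 1 \<in> H" "det x \<noteq> 0"
  obtains n h where "n > 0" "h \<in> H" "mat_pow x n ** h = mat 1"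
proof -
  define coset where "coset k = (\<lambda>h. mat_pow x k ** h) ` H" for k
  have "range coset \<subseteq> {(\<lambda>h. g ** h) ` H | g. g \<in> G}"
    unfolding coset_def using assms(2) by blast
  then have "finite (range coset)"
    using assms(1) by (rule finite_subset)
  then have "\<not> inj coset"
    using finite_imageD[of coset UNIV] by auto
  then obtain i j where "i \<noteq> j" "coset i = coset j"
    unfolding inj_def by blast
  then obtain i j where "i < j" "coset i = coset j"
    by (metis linorder_neqE_nat)
  then obtain n where "n > 0" and j: "j = i + n"
    using less_imp_add_positive by blast
  have "mat_pow x i \<in> coset j"
    using imageI[OF assms(3), of "\<lambda>h. mat_pow x i ** h"] \<open>coset i = coset j\<close>
    unfolding coset_def by simp
  then obtain h where "h \<in> H" and h: "mat_pow x i = mat_pow x i ** (mat_pow x n ** h)"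
    unfolding coset_def j mat_pow_add by (auto simp: matrix_mul_assoc)
  have "invertible (mat_pow x i)"
    using assms(4) by (simp add: invertible_det_nz det_mat_pow)
  then obtain B where B: "B ** mat_pow x i = mat 1"
    using invertible_left_inverse by blast
  have "mat_pow x n ** h = B ** mat_pow x i ** (mat_pow x n ** h)"
    by (simp add: B)
  also have "\<dots> = B ** (mat_pow x i ** (mat_pow x n ** h))"
    by (simp add: matrix_mul_assoc)
  also have "\<dots> = mat 1"
    by (simp flip: h add: B)
  finally show ?thesis
    using that \<open>n > 0\<close> \<open>h \<in> H\<close> by blast
qed

section \<open>Parabolic subgroups\<close>

lemma mat_1_SL2_ring_of_integers: "mat 1 \<in> SL2 (ring_of_integers (imag_quad_field d))"
proof -
  have "(mat 1 :: complex^2^2) $ i $ j \<in> ring_of_integers (imag_quad_field d)" for i j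
    using alg_int_of_int[of 0] alg_int_of_int[of 1] imag_quad_field_0 imag_quad_field_1
    by (simp add: ring_of_integers_def mat_def)
  then show ?thesis
    by (simp add: SL2_def)
qed

lemma SL2_ring_of_integers_trace:
  assumes "h \<in> SL2 (ring_of_integers (imag_quad_field d))"
  shows "bounded_denom d (trace h)"
  using assms unfolding trace_2 SL2_def ring_of_integers_def
  by (blast intro: bounded_denom_add alg_int_bounded_denom)

lemma SL2_mult:
  assumes "A \<in> SL2 (imag_quad_field d)" "B \<in> SL2 (imag_quad_field d)"
  shows "A ** B \<in> SL2 (imag_quad_field d)"
  using assms unfolding SL2_def
  by (auto simp: matrix_matrix_mult_2 det_mul intro!: imag_quad_field_add imag_quad_field_mult)

lemma unipotent_radical_ptsI:
  assumes "y \<in> SL2 (imag_quad_field d)" "y *v v = v" "vec_in (imag_quad_field d) v" "v \<noteq> 0"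
  shows "y \<in> unipotent_radical_pts (imag_quad_field d) v"
proof -
  obtain k where "v$k \<noteq> 0"
    using assms(4) by (metis vec_eq_iff zero_index)
  have "\<exists>c\<in>imag_quad_field d. y *v w - w = c *s v" if "vec_in (imag_quad_field d) w" for w
  proof -
    obtain l where "y *v w = 1 *s w + l *s v"
      using pm_unipotent_image[of y v 1 w] assms(1,2,4) unfolding SL2_def by auto
    then have l: "y *v w - w = l *s v"
      by simp
    then have "l = (y$k$1 * w$1 + y$k$2 * w$2 - w$k) / v$k"
      using \<open>v$k \<noteq> 0\<close> by (simp add: vec_eq_iff matrix_vector_mult_2 field_simps)
    also have "\<dots> \<in> imag_quad_field d"
      using assms(1,3) that unfolding SL2_def vec_in_def
      by (blast intro: imag_quad_field_divide imag_quad_field_diff imag_quad_field_add imag_quad_field_mult)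
    finally show ?thesis
      using l by blast
  qed
  then show ?thesis
    using assms(1,2) unfolding unipotent_radical_pts_def by blast
qed

lemma unipotent_radical_pts_subset:
  "unipotent_radical_pts (imag_quad_field d) v \<subseteq> parabolic_pts (imag_quad_field d) v"
  unfolding unipotent_radical_pts_def parabolic_pts_def using imag_quad_field_1 by force

lemma parabolic_eigenvalue_pm1:
  assumes "squarefree d" "d \<noteq> 1" "d \<noteq> 3" "arithmetic_subgroup (imag_quad_field d) \<Gamma>"
    and "v \<noteq> 0" "x \<in> \<Gamma>" "x *v v = c *s v" "c \<in> imag_quad_field d"
  shows "c = 1 \<or> c = -1"
proof -
  let ?O = "SL2 (ring_of_integers (imag_quad_field d))"
  have sub: "is_subgroup \<Gamma> (SL2 (imag_quad_field d))"
    and fin: "finite {(\<lambda>h. g ** h) ` (\<Gamma> \<inter> ?O) | g. g \<in> \<Gamma>}"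
    using assms(4) unfolding arithmetic_subgroup_def commensurable_def finite_index_def by auto
  have "det x = 1"
    using sub assms(6) unfolding is_subgroup_def SL2_def by blast
  have "mat_pow x k \<in> \<Gamma>" for k
    using sub assms(6) unfolding is_subgroup_def by (induction k) auto
  moreover have "mat 1 \<in> \<Gamma> \<inter> ?O"
    using sub mat_1_SL2_ring_of_integers unfolding is_subgroup_def by blast
  ultimately obtain n h where "n > 0" "h \<in> ?O" "mat_pow x n ** h = mat 1"
    using mat_pow_inverse_in_finite_index[OF fin] \<open>det x = 1\<close> by (metis IntD2 zero_neq_one)
  then have "c ^ n * c ^ n - trace h * c ^ n + 1 = 0"
    using inverse_eigenvalue_char_poly_2 mat_pow_eigenvector[OF assms(7)] assms(5)
    unfolding SL2_def by blast
  moreover have "d > 0"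
    using assms(1) by (cases d) simp_all
  ultimately have "bounded_denom d (c ^ n)" "cmod (c ^ n) = 1"
    using quadratic_unit SL2_ring_of_integers_trace[OF \<open>h \<in> ?O\<close>] imag_quad_field_power[OF assms(8)]
    unfolding mult_cnj_eq_1_iff by blast+
  then have "bounded_denom d c" and "cmod c ^ n = 1"
    using bounded_denom_root[OF assms(8) \<open>n > 0\<close>] by (simp_all add: norm_power)
  moreover from \<open>cmod c ^ n = 1\<close> have "c * cnj c = 1"
    using power_eq_iff_eq_base[of n "cmod c" 1] \<open>n > 0\<close> by (simp add: mult_cnj_eq_1_iff)
  ultimately show ?thesis
    using imag_quad_unit_eq_pm1 assms(1-3,8) by blast
qed

lemma parabolic_pts_mult:
  assumes "x \<in> parabolic_pts (imag_quad_field d) v" "y \<in> parabolic_pts (imag_quad_field d) v"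
  shows "x ** y \<in> parabolic_pts (imag_quad_field d) v"
proof -
  obtain a b where "a \<in> imag_quad_field d" "x *v v = a *s v" "b \<in> imag_quad_field d" "y *v v = b *s v"
    using assms unfolding parabolic_pts_def by blast
  then have "(x ** y) *v v = (b * a) *s v" "b * a \<in> imag_quad_field d"
    by (simp_all flip: matrix_vector_mul_assoc add: vector_scalar_commute imag_quad_field_mult)
  then show ?thesis
    using assms SL2_mult unfolding parabolic_pts_def by blast
qed

lemma unipotent_radical_pts_mult:
  assumes "x \<in> unipotent_radical_pts (imag_quad_field d) v" "y \<in> unipotent_radical_pts (imag_quad_field d) v"
  shows "x ** y \<in> unipotent_radical_pts (imag_quad_field d) v"
proof -
  have "\<exists>c\<in>imag_quad_field d. (x ** y) *v w - w = c *s v" if w: "vec_in (imag_quad_field d) w" for w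
  proof -
    obtain a b where "a \<in> imag_quad_field d" "x *v w - w = a *s v"
      and "b \<in> imag_quad_field d" "y *v w - w = b *s v"
      using assms w unfolding unipotent_radical_pts_def by blast
    moreover have "x *v v = v"
      using assms(1) unfolding unipotent_radical_pts_def by blast
    ultimately have "(x ** y) *v w = x *v (b *s v + w)"
      by (simp flip: matrix_vector_mul_assoc add: diff_eq_eq)
    also have "\<dots> = (a + b) *s v + w"
      using \<open>x *v v = v\<close> \<open>x *v w - w = a *s v\<close>
      by (simp add: matrix_vector_right_distrib vector_scalar_commute diff_eq_eq vec_eq_iff algebra_simps)
    finally show ?thesis
      using \<open>a \<in> imag_quad_field d\<close> \<open>b \<in> imag_quad_field d\<close> imag_quad_field_add by force
  qed
  moreover have "(x ** y) *v v = v"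
    using assms unfolding unipotent_radical_pts_def by (simp flip: matrix_vector_mul_assoc)
  ultimately show ?thesis
    using assms SL2_mult unfolding unipotent_radical_pts_def by blast
qed

locale imag_quad_cusp =
  fixes d :: nat and \<Gamma> :: "(complex^2^2) set" and v :: "complex^2"
  assumes squarefree: "squarefree d" and not_1: "d \<noteq> 1" and not_3: "d \<noteq> 3"
    and arithmetic: "arithmetic_subgroup (imag_quad_field d) \<Gamma>"
    and vec_in_v: "vec_in (imag_quad_field d) v" and nonzero: "v \<noteq> 0"
begin

abbreviation "\<Gamma>\<^sub>P \<equiv> \<Gamma> \<inter> parabolic_pts (imag_quad_field d) v"
abbreviation "\<Gamma>\<^sub>U \<equiv> \<Gamma> \<inter> unipotent_radical_pts (imag_quad_field d) v"

lemma Gamma_subgroup: "is_subgroup \<Gamma> (SL2 (imag_quad_field d))"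
  using arithmetic unfolding arithmetic_subgroup_def by blast

lemma Gamma_mult: "x \<in> \<Gamma> \<Longrightarrow> y \<in> \<Gamma> \<Longrightarrow> x ** y \<in> \<Gamma>"
  using Gamma_subgroup unfolding is_subgroup_def by blast

lemma Gamma_P_eigenvalue:
  assumes "x \<in> \<Gamma>\<^sub>P"
  obtains e where "x *v v = e *s v" "e * e = 1" "det x = 1"
proof -
  obtain c where c: "c \<in> imag_quad_field d" "x *v v = c *s v" "det x = 1"
    using assms unfolding parabolic_pts_def SL2_def by blast
  then have "c = 1 \<or> c = -1"
    using parabolic_eigenvalue_pm1[OF squarefree not_1 not_3 arithmetic nonzero] assms by blast
  then have "c * c = 1"
    by auto
  with c show ?thesis
    using that by blast
qed

lemma Gamma_P_commute: "x \<in> \<Gamma>\<^sub>P \<Longrightarrow> y \<in> \<Gamma>\<^sub>P \<Longrightarrow> x ** y = y ** x"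
  by (metis Gamma_P_eigenvalue pm_unipotent_commute nonzero)

lemma Gamma_P_square:
  assumes "x \<in> \<Gamma>\<^sub>P"
  shows "x ** x \<in> \<Gamma>\<^sub>U"
proof -
  obtain e where "x *v v = e *s v" "e * e = 1"
    using assms by (rule Gamma_P_eigenvalue)
  then have "(x ** x) *v v = v"
    by (simp flip: matrix_vector_mul_assoc add: vector_scalar_commute)
  moreover have "x ** x \<in> \<Gamma>"
    using assms Gamma_mult by blast
  ultimately show ?thesis
    using Gamma_subgroup vec_in_v nonzero unipotent_radical_ptsI unfolding is_subgroup_def by blast
qed

end

section \<open>Cohomology\<close>

lemma H1_iso_restriction_to_squares:
  fixes P U :: "(complex^2^2) set" and u :: "'r::ring_1"
  assumes "U \<subseteq> P"
    and U_mult: "\<And>x y. x \<in> U \<Longrightarrow> y \<in> U \<Longrightarrow> x ** y \<in> U"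
    and P_mult: "\<And>x y. x \<in> P \<Longrightarrow> y \<in> P \<Longrightarrow> x ** y \<in> P"
    and P_comm: "\<And>x y. x \<in> P \<Longrightarrow> y \<in> P \<Longrightarrow> x ** y = y ** x"
    and square: "\<And>x. x \<in> P \<Longrightarrow> x ** x \<in> U"
    and half: "u * 2 = 1"
  shows "H1_iso (H1 P :: (complex^2^2 \<Rightarrow> 'r) set) (H1 U)"
proof -
  define res :: "(complex^2^2 \<Rightarrow> 'r) \<Rightarrow> complex^2^2 \<Rightarrow> 'r"
    where "res g z = (if z \<in> U then g z else 0)" for g z
  define ext :: "(complex^2^2 \<Rightarrow> 'r) \<Rightarrow> complex^2^2 \<Rightarrow> 'r"
    where "ext h z = (if z \<in> P then u * h (z ** z) else 0)" for h z
  have halve: "u * (a + a) = a" for a :: 'r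
    using half by (metis mult.assoc mult_1 mult_2)
  have res_H1: "res g \<in> H1 U" if "g \<in> H1 P" for g
    using that \<open>U \<subseteq> P\<close> U_mult unfolding H1_def res_def by (auto simp: subset_iff)
  have ext_res: "ext (res g) = g" if "g \<in> H1 P" for g
  proof
    fix z
    show "ext (res g) z = g z"
      using that square[of z] halve[of "g z"] unfolding H1_def ext_def res_def by auto
  qed
  have ext_H1: "ext h \<in> H1 P" if h: "h \<in> H1 U" for h
  proof -
    have "ext h (x ** y) = ext h x + ext h y" if "x \<in> P" "y \<in> P" for x y
    proof -
      have "(x ** y) ** (x ** y) = (x ** x) ** (y ** y)"
        using P_comm[OF that] by (metis matrix_mul_assoc)
      then show ?thesis
        using h that P_mult square unfolding H1_def ext_def by (simp add: distrib_left)
    qed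
    then show ?thesis
      unfolding H1_def ext_def by simp
  qed
  have res_ext: "res (ext h) = h" if "h \<in> H1 U" for h
  proof
    fix z
    show "res (ext h) z = h z"
      using that \<open>U \<subseteq> P\<close> halve[of "h z"] unfolding H1_def ext_def res_def by auto
  qed
  have "bij_betw res (H1 P) (H1 U)"
    by (rule bij_betw_byWitness[of _ ext]) (use res_H1 ext_res ext_H1 res_ext in auto)
  moreover have "res (\<lambda>x. f x + g x) = (\<lambda>x. res f x + res g x)"
    and "res (\<lambda>x. r * f x) = (\<lambda>x. r * res f x)" for f g and r :: 'r
    unfolding res_def by auto
  ultimately show ?thesis
    unfolding H1_iso_def by blast
qed

theorem lemma4p9:
  fixes d :: nat and \<Gamma> :: "(complex^2^2) set" and v :: "complex^2"
  assumes "squarefree d" and "d \<noteq> 1" and "d \<noteq> 3"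
    and "arithmetic_subgroup (imag_quad_field d) \<Gamma>"
    and "vec_in (imag_quad_field d) v" and "v \<noteq> 0"
    and "\<exists>u::'r::ring_1. 2 * u = 1 \<and> u * 2 = 1"
  shows "H1_iso (H1 (\<Gamma> \<inter> parabolic_pts (imag_quad_field d) v) :: (complex^2^2 \<Rightarrow> 'r) set)
                (H1 (\<Gamma> \<inter> unipotent_radical_pts (imag_quad_field d) v))"
proof -
  interpret imag_quad_cusp d \<Gamma> v
    using assms(1-6) by unfold_locales
  obtain u :: 'r where "u * 2 = 1"
    using assms(7) by blast
  show ?thesis
  proof (rule H1_iso_restriction_to_squares)
    show "\<Gamma>\<^sub>U \<subseteq> \<Gamma>\<^sub>P"
      using unipotent_radical_pts_subset by blast
    show "x ** y \<in> \<Gamma>\<^sub>U" if "x \<in> \<Gamma>\<^sub>U" "y \<in> \<Gamma>\<^sub>U" for x y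
      using that Gamma_mult unipotent_radical_pts_mult by blast
    show "x ** y \<in> \<Gamma>\<^sub>P" if "x \<in> \<Gamma>\<^sub>P" "y \<in> \<Gamma>\<^sub>P" for x y
      using that Gamma_mult parabolic_pts_mult by blast
  qed (use Gamma_P_commute Gamma_P_square \<open>u * 2 = 1\<close> in auto)
qed

end
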